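(* Let $z>0$ be an integer and $$\theta=-\log\frac{2q+h^{z/2}}{1+h^{z/2}}.$$ There exist $u_0>0$, $c_1>0$, $c_2>0$ such that for all $u\ge u_0$ and all $n\ge u^2$, $$c_1e^{-\theta u}\le\mathbf P(\Xi(\{0,z\},n)\ge u)\le\mathbf P(\Xi(\{0,z\},\infty)\ge u)\le c_2e^{-\theta u}.$$
   Context: Let $0<q<p<1$ with $p+q=1$ and $h=q/p$. Let $X_1,X_2,\dots$ be i.i.d. with $\mathbf P(X_1=1)=p$, $\mathbf P(X_1=-1)=q$, $S_0=0$, $S_n=X_1+\dots+X_n$. For $x\in\mathbb Z$, $n\ge1$, $\xi(x,n)=\#\{k:0<k\le n,\ S_k=x\}$, $\xi(x,\infty)=\lim_n\xi(x,n)$, and for $A\subset\mathbb Z$, $\Xi(A,n)=\sum_{x\in A}\xi(x,n)$ (also for $n=\infty$). *)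

theory Defs
  imports "HOL-Probability.Probability"
begin

text \<open>Steps are X 1, X 2, ... (X 0 is unused). Partial sums S_n = X_1 + ... + X_n.\<close>
definition walkS :: "(nat \<Rightarrow> 'a \<Rightarrow> int) \<Rightarrow> nat \<Rightarrow> 'a \<Rightarrow> int" where
  "walkS X n \<omega> = (\<Sum>k\<in>{1..n}. X k \<omega>)"

definition xi :: "(nat \<Rightarrow> 'a \<Rightarrow> int) \<Rightarrow> int \<Rightarrow> nat \<Rightarrow> 'a \<Rightarrow> nat" where
  "xi X x n \<omega> = card {k. 0 < k \<and> k \<le> n \<and> walkS X k \<omega> = x}"

definition xi_inf :: "(nat \<Rightarrow> 'a \<Rightarrow> int) \<Rightarrow> int \<Rightarrow> 'a \<Rightarrow> enat" where
  "xi_inf X x \<omega> = (SUP n. enat (xi X x n \<omega>))"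

definition Xi :: "(nat \<Rightarrow> 'a \<Rightarrow> int) \<Rightarrow> int set \<Rightarrow> nat \<Rightarrow> 'a \<Rightarrow> nat" where
  "Xi X A n \<omega> = (\<Sum>x\<in>A. xi X x n \<omega>)"

definition Xi_inf :: "(nat \<Rightarrow> 'a \<Rightarrow> int) \<Rightarrow> int set \<Rightarrow> 'a \<Rightarrow> enat" where
  "Xi_inf X A \<omega> = (\<Sum>x\<in>A. xi_inf X x \<omega>)"

end

theory Submission
  imports Defs
begin

text \<open>With \<open>r = sqrt (q/p)\<close>, the functions \<open>1\<close> and \<open>r^(2x) = h^x\<close> are harmonic for the walk, and the
  combination \<open>G\<close> that equals \<open>1\<close> on \<open>(-\<infinity>, 0]\<close>, \<open>(r^z + r^(2x)) / (1 + r^z)\<close> on \<open>[0, z]\<close> and \<open>r^(2x) / r^z\<close>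
  on \<open>[z, \<infinity>)\<close> is harmonic off \<open>{0, z}\<close> and satisfies \<open>p G(x+1) + q G(x-1) = \<lambda> G(x)\<close> at both \<open>0\<close>
  and \<open>z\<close>, where \<open>\<lambda> = (2q + r^z) / (1 + r^z) = exp (-\<theta>)\<close>. Hence \<open>G(S_n) / \<lambda>^V_n\<close>, with \<open>V_n\<close> the number of
  visits to \<open>{0, z}\<close> and the current visit not yet counted, is a martingale. Stopped at the \<open>m\<close>-th
  visit it has mean \<open>\<lambda>\<close>; since \<open>r^z \<le> G \<le> 1\<close> on \<open>{0, z}\<close> this gives \<open>P(V_n \<ge> m) \<le> \<lambda>^m / r^z\<close>, and
  since \<open>G(x) \<le> r^x / r^z\<close> and \<open>E r^S_n = (2 sqrt (p q))^n\<close> it also gives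
  \<open>\<lambda>^(m+1) \<le> \<lambda> P(V_n \<ge> m) + (2 sqrt (p q))^n / r^z\<close>, where the last term is negligible once \<open>n \<ge> u^2\<close>.
  All expectations are finite sums over the \<open>2^n\<close> step sequences.\<close>

section \<open>Weighted sums over step sequences\<close>

text \<open>Paths are step lists with the most recent step first, so \<open>sum_list\<close> of a list is the
  current position and its tails are the earlier paths.\<close>

definition pm_lists :: "nat \<Rightarrow> int list set" where
  "pm_lists n = {xs. set xs \<subseteq> {-1, 1} \<and> length xs = n}"

definition path_weight :: "real \<Rightarrow> real \<Rightarrow> int list \<Rightarrow> real" where
  "path_weight p q xs = (\<Prod>e\<leftarrow>xs. if e = 1 then p else q)"

lemma finite_pm_lists: "finite (pm_lists n)"
  unfolding pm_lists_def by (rule finite_lists_length_eq) simp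

lemma pm_lists_0: "pm_lists 0 = {[]}"
  by (auto simp: pm_lists_def)

lemma path_weight_Nil [simp]: "path_weight p q [] = 1"
  and path_weight_Cons [simp]: "path_weight p q (e # xs) = (if e = 1 then p else q) * path_weight p q xs"
  by (simp_all add: path_weight_def)

lemma path_weight_nonneg: "0 \<le> p \<Longrightarrow> 0 \<le> q \<Longrightarrow> 0 \<le> path_weight p q xs"
  by (induction xs) auto

lemma sum_pm_lists_Suc:
  "(\<Sum>xs\<in>pm_lists (Suc n). f xs) = (\<Sum>xs\<in>pm_lists n. f (1 # xs) + f ((-1) # xs))"
proof -
  have "(\<Sum>xs\<in>pm_lists (Suc n). f xs) = (\<Sum>(xs, e)\<in>pm_lists n \<times> {-1, 1}. f (e # xs))"
    unfolding pm_lists_def lists_length_Suc_eq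
    by (subst sum.reindex) (auto simp: inj_split_Cons case_prod_beta)
  also have "\<dots> = (\<Sum>xs\<in>pm_lists n. f (1 # xs) + f ((-1) # xs))"
    by (subst sum.cartesian_product[symmetric]) (simp add: add.commute)
  finally show ?thesis .
qed

lemma sum_path_weight_Suc:
  "(\<Sum>xs\<in>pm_lists (Suc n). path_weight p q xs * f xs)
     = (\<Sum>xs\<in>pm_lists n. path_weight p q xs * (p * f (1 # xs) + q * f ((-1) # xs)))"
  unfolding sum_pm_lists_Suc by (intro sum.cong refl) (simp add: algebra_simps)

lemma sum_path_weight_martingale:
  assumes "\<And>xs. p * f (1 # xs) + q * f ((-1) # xs) = f xs"
  shows "(\<Sum>xs\<in>pm_lists n. path_weight p q xs * f xs) = f []"
  by (induction n) (simp_all add: pm_lists_0 sum_path_weight_Suc assms)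

lemma sum_path_weight_power_int:
  assumes "r \<noteq> 0"
  shows "(\<Sum>xs\<in>pm_lists n. path_weight p q xs * r powi sum_list xs) = (p * r + q / r) ^ n"
proof (induction n)
  case (Suc n)
  have step: "p * r powi sum_list (1 # xs) + q * r powi sum_list ((-1) # xs)
      = (p * r + q / r) * r powi sum_list xs" for xs
    using assms by (simp add: power_int_add power_int_diff field_simps)
  show ?case
    unfolding sum_path_weight_Suc step
    by (simp add: mult.left_commute[of _ "p * r + q / r"] sum_distrib_left[symmetric] Suc)
qed (simp add: pm_lists_0)

fun visits :: "int set \<Rightarrow> int list \<Rightarrow> nat" where
  "visits A [] = 0"
| "visits A (e # xs) = visits A xs + (if sum_list (e # xs) \<in> A then 1 else 0)"

text \<open>\<open>stopped D f\<close> freezes \<open>f\<close> at the earliest time the path satisfies \<open>D\<close>.\<close>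

fun stopped :: "('a list \<Rightarrow> bool) \<Rightarrow> ('a list \<Rightarrow> 'b) \<Rightarrow> 'a list \<Rightarrow> 'b" where
  "stopped D f [] = f []"
| "stopped D f (e # xs) = (if D xs then stopped D f xs else f (e # xs))"

lemma stopped_before:
  assumes "\<And>e xs. D xs \<Longrightarrow> D (e # xs)" and "\<not> D xs"
  shows "stopped D f xs = f xs"
  using assms by (cases xs) auto

lemma stopped_after:
  assumes "D xs"
  shows "\<exists>ys. D ys \<and> (ys = [] \<or> \<not> D (tl ys)) \<and> stopped D f xs = f ys"
  using assms by (induction xs) auto

lemma stopped_martingale:
  fixes f :: "int list \<Rightarrow> real"
  assumes "\<And>e xs. D xs \<Longrightarrow> D (e # xs)" and "p + q = 1"
    and "\<And>xs. p * f (1 # xs) + q * f ((-1) # xs) = f xs"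
  shows "p * stopped D f (1 # xs) + q * stopped D f ((-1) # xs) = stopped D f xs"
proof (cases "D xs")
  case True
  then show ?thesis using assms(2) by (simp flip: distrib_right)
next
  case False
  then show ?thesis using assms(3) stopped_before[OF assms(1) False, of f] by simp
qed

lemma visits_first_reach:
  assumes "m \<le> visits A ys" and "ys = [] \<or> \<not> m \<le> visits A (tl ys)"
  shows "visits A ys = m \<and> (ys = [] \<or> sum_list ys \<in> A)"
  using assms by (cases ys) (auto split: if_splits)

section \<open>A potential for visits to two points\<close>

locale two_point_potential =
  fixes p q r :: real and z :: nat
  assumes p_pos: "0 < p" and p_plus_q: "p + q = 1" and p_r_sq: "p * r\<^sup>2 = q"
    and r_pos: "0 < r" and r_less_1: "r < 1" and z_pos: "0 < z"
begin

definition lam :: real where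
  "lam = (2 * q + r ^ z) / (1 + r ^ z)"

definition potential :: "int \<Rightarrow> real" where
  "potential x = (if x \<le> 0 then 1
     else if x \<le> int z then (r ^ z + r powi (2 * x)) / (1 + r ^ z)
     else r powi (2 * x) / r ^ z)"

lemma q_pos: "0 < q"
  using p_pos r_pos p_r_sq by (metis mult_pos_pos zero_less_power)

lemma twice_q_less_1: "2 * q < 1"
proof -
  have "r\<^sup>2 < 1" using r_pos r_less_1 by (simp add: power_less_one_iff)
  then have "q < p" using p_pos p_r_sq by (metis mult.right_neutral mult_strict_left_mono)
  then show ?thesis using p_plus_q by linarith
qed

lemma lam_pos: "0 < lam"
  using q_pos r_pos unfolding lam_def by (simp add: add_pos_pos)

lemma lam_less_1: "lam < 1"
  using twice_q_less_1 r_pos unfolding lam_def by (simp add: add_pos_pos)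

lemma step_mgf_bounds: "0 < p * r + q / r" "p * r + q / r < 1"
proof -
  have "(2 * p * r)\<^sup>2 < 1\<^sup>2"
  proof -
    have "q \<noteq> p" using twice_q_less_1 p_plus_q by linarith
    then have "0 < (p - q)\<^sup>2" by simp
    moreover have "(p + q)\<^sup>2 = 4 * p * q + (p - q)\<^sup>2" by (simp add: power2_eq_square algebra_simps)
    moreover have "(2 * p * r)\<^sup>2 = 4 * p * q" using p_r_sq by (simp add: power2_eq_square algebra_simps)
    ultimately show ?thesis using p_plus_q by (simp only: power_one)
  qed
  then have "2 * p * r < 1" by (rule power_less_imp_less_base) simp
  moreover have "q / r = p * r" using p_r_sq r_pos by (simp add: field_simps power2_eq_square)
  ultimately show "0 < p * r + q / r" "p * r + q / r < 1" using p_pos r_pos by simp_all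
qed

lemma potential_nonpos: "x \<le> 0 \<Longrightarrow> potential x = 1"
  by (simp add: potential_def)

lemma potential_middle:
  assumes "0 \<le> x" "x \<le> int z"
  shows "potential x = (r ^ z + r powi (2 * x)) / (1 + r ^ z)"
proof -
  have "0 < 1 + r ^ z" using r_pos by (intro add_pos_pos) auto
  then show ?thesis using assms by (auto simp: potential_def)
qed

lemma potential_right:
  assumes "int z \<le> x"
  shows "potential x = r powi (2 * x) / r ^ z"
proof (cases "x = int z")
  case True
  define s where "s = r ^ z"
  have "r powi (2 * int z) = s * s"
    by (simp add: s_def power_int_mult power2_eq_square power_mult_distrib)
  moreover have "0 < s" using r_pos by (simp add: s_def)
  ultimately have "potential x = (s + s * s) / (1 + s)" "r powi (2 * x) / r ^ z = s"
    using True z_pos by (simp_all add: potential_def s_def[symmetric])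
  moreover have "(s + s * s) / (1 + s) = s"
    using \<open>0 < s\<close> by (simp add: field_simps)
  ultimately show ?thesis by simp
qed (use assms z_pos in \<open>auto simp: potential_def\<close>)

lemma power_int_harmonic: "p * r powi (2 * x + 2) + q * r powi (2 * x - 2) = r powi (2 * x)"
proof -
  have "q / r\<^sup>2 = p"
    using p_r_sq r_pos by (auto simp: field_simps)
  then have "p * r\<^sup>2 + q / r\<^sup>2 = 1"
    using p_plus_q p_r_sq by linarith
  moreover have "r powi (2 * x + 2) = r powi (2 * x) * r\<^sup>2" "r powi (2 * x - 2) = r powi (2 * x) / r\<^sup>2"
    using r_pos by (simp_all add: power_int_add power_int_diff)
  then have "p * r powi (2 * x + 2) + q * r powi (2 * x - 2) = r powi (2 * x) * (p * r\<^sup>2 + q / r\<^sup>2)"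
    by (simp add: algebra_simps)
  ultimately show ?thesis by simp
qed

lemma potential_harmonic_off:
  assumes "x \<notin> {0, int z}"
  shows "p * potential (x + 1) + q * potential (x - 1) = potential x"
proof -
  consider "x < 0" | "0 < x" "x < int z" | "int z < x" using assms by force
  then show ?thesis
  proof cases
    case 1
    then show ?thesis using p_plus_q by (simp add: potential_nonpos)
  next
    case 2
    have "potential (x + 1) = (r ^ z + r powi (2 * x + 2)) / (1 + r ^ z)"
      "potential (x - 1) = (r ^ z + r powi (2 * x - 2)) / (1 + r ^ z)"
      using 2 by (simp_all add: potential_middle distrib_left del: add_divide_distrib)
    then have "p * potential (x + 1) + q * potential (x - 1)
        = (p * (r ^ z + r powi (2 * x + 2)) + q * (r ^ z + r powi (2 * x - 2))) / (1 + r ^ z)"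
      by (simp only: times_divide_eq_right add_divide_distrib[symmetric])
    also have "\<dots> = ((p + q) * r ^ z + (p * r powi (2 * x + 2) + q * r powi (2 * x - 2))) / (1 + r ^ z)"
      by (simp add: algebra_simps)
    also have "\<dots> = (r ^ z + r powi (2 * x)) / (1 + r ^ z)"
      by (simp only: power_int_harmonic p_plus_q mult_1)
    finally show ?thesis using potential_middle[of x] 2 by simp
  next
    case 3
    have "potential (x + 1) = r powi (2 * x + 2) / r ^ z" "potential (x - 1) = r powi (2 * x - 2) / r ^ z"
      using 3 by (simp_all add: potential_right distrib_left)
    then have "p * potential (x + 1) + q * potential (x - 1)
        = (p * r powi (2 * x + 2) + q * r powi (2 * x - 2)) / r ^ z"
      by (simp only: add_divide_distrib times_divide_eq_right)
    then show ?thesis using 3 by (simp add: power_int_harmonic potential_right)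
  qed
qed

lemma potential_harmonic_0: "p * potential 1 + q * potential (-1) = lam * potential 0"
proof -
  have "0 < 1 + r ^ z" using r_pos by (intro add_pos_pos) auto
  then have "p * potential 1 + q * potential (-1) = (p * (r ^ z + r\<^sup>2) + q * (1 + r ^ z)) / (1 + r ^ z)"
    using z_pos by (simp add: potential_middle potential_nonpos field_simps)
  also have "p * (r ^ z + r\<^sup>2) + q * (1 + r ^ z) = 2 * q + r ^ z"
    using p_plus_q p_r_sq by (simp add: algebra_simps) (simp flip: distrib_right)
  finally show ?thesis by (simp add: lam_def potential_nonpos)
qed

lemma potential_harmonic_z: "p * potential (int z + 1) + q * potential (int z - 1) = lam * potential (int z)"
proof -
  define s where "s = r ^ z"
  have s_pos: "0 < s" using r_pos by (simp add: s_def)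
  have r_2z: "r powi (2 * int z) = s * s" "r powi (int z * 2) = s * s"
    by (simp_all add: s_def power_int_mult power2_eq_square power_mult_distrib mult.commute[of _ 2])
  have "p * potential (int z + 1) = p * r\<^sup>2 * s"
    using r_pos s_pos by (simp add: potential_right power_int_add r_2z s_def[symmetric])
  moreover have "q * potential (int z - 1) = (q * s + q / r\<^sup>2 * s * s) / (1 + s)"
    using r_pos z_pos by (simp add: potential_middle power_int_diff r_2z s_def[symmetric] algebra_simps)
  moreover have "q / r\<^sup>2 = p" using p_r_sq r_pos by (auto simp: field_simps)
  ultimately have "p * potential (int z + 1) + q * potential (int z - 1) = q * s + (q * s + p * s * s) / (1 + s)"
    using p_r_sq by simp
  also have "\<dots> = (2 * q + s) / (1 + s) * s"
    using s_pos p_plus_q by (simp add: field_simps) (simp flip: distrib_right)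
  finally show ?thesis
    using s_pos by (simp add: potential_right r_2z lam_def s_def[symmetric])
qed

lemma potential_harmonic:
  "p * potential (x + 1) + q * potential (x - 1) = (if x \<in> {0, int z} then lam else 1) * potential x"
  using potential_harmonic_off[of x] potential_harmonic_0 potential_harmonic_z by auto

lemma potential_z: "potential (int z) = r ^ z"
  using r_pos by (simp add: potential_right power_int_mult power2_eq_square power_mult_distrib)

lemma potential_pos: "0 < potential x"
  using r_pos by (auto simp: potential_def intro!: divide_pos_pos add_pos_pos)

lemma potential_le_power_int: "potential x \<le> r powi x / r ^ z"
proof -
  have rz: "0 < r ^ z" "r ^ z \<le> 1" using r_pos r_less_1 by (auto simp: power_le_one)
  consider "x \<le> 0" | "0 \<le> x" "x \<le> int z" | "int z \<le> x" by linarith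
  then show ?thesis
  proof cases
    case 1
    then have "1 \<le> r powi x"
      using r_pos r_less_1 power_int_decreasing[of x 0 r] by simp
    then show ?thesis using 1 rz by (simp add: potential_nonpos le_divide_eq mult_le_one order_trans[OF rz(2)])
  next
    case 2
    have "r powi (2 * x) \<le> 1" using 2 r_pos r_less_1 by (intro power_int_le_one) auto
    then have "potential x \<le> 1" using 2 rz by (simp add: potential_middle)
    moreover have "r ^ z \<le> r powi x"
      using 2 r_pos r_less_1 power_int_decreasing[of x "int z" r] by simp
    ultimately show ?thesis
      using rz potential_pos[of x] by (simp add: le_divide_eq) (metis mult_left_le_one_le order_trans less_imp_le)
  next
    case 3
    then have "r powi (2 * x) \<le> r powi x"
      using z_pos r_pos r_less_1 by (intro power_int_decreasing) auto
    then show ?thesis using 3 rz by (simp add: potential_right divide_right_mono)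
  qed
qed

definition visit_martingale :: "int list \<Rightarrow> real" where
  "visit_martingale xs = (if sum_list xs \<in> {0, int z} then lam else 1) * potential (sum_list xs)
     / lam ^ visits {0, int z} xs"

lemma visit_martingale_Nil: "visit_martingale [] = lam"
  by (simp add: visit_martingale_def potential_nonpos)

lemma visit_martingale_Cons:
  "visit_martingale (e # xs) = potential (sum_list xs + e) / lam ^ visits {0, int z} xs"
  using lam_pos by (simp add: visit_martingale_def add.commute)

lemma visit_martingale_step:
  "p * visit_martingale (1 # xs) + q * visit_martingale ((-1) # xs) = visit_martingale xs"
proof -
  have "p * visit_martingale (1 # xs) + q * visit_martingale ((-1) # xs)
      = (p * potential (sum_list xs + 1) + q * potential (sum_list xs - 1)) / lam ^ visits {0, int z} xs"
    by (simp add: visit_martingale_Cons add_divide_distrib)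
  also have "\<dots> = visit_martingale xs"
    by (simp only: potential_harmonic visit_martingale_def)
  finally show ?thesis .
qed

definition stopped_visit_martingale :: "nat \<Rightarrow> int list \<Rightarrow> real" where
  "stopped_visit_martingale m = stopped (\<lambda>xs. m \<le> visits {0, int z} xs) visit_martingale"

lemma sum_stopped_visit_martingale:
  "(\<Sum>xs\<in>pm_lists n. path_weight p q xs * stopped_visit_martingale m xs) = lam"
proof -
  have "p * stopped_visit_martingale m (1 # xs) + q * stopped_visit_martingale m ((-1) # xs)
      = stopped_visit_martingale m xs" for xs
    unfolding stopped_visit_martingale_def
    by (rule stopped_martingale[OF _ p_plus_q visit_martingale_step]) simp
  then show ?thesis
    by (simp add: sum_path_weight_martingale stopped_visit_martingale_def visit_martingale_Nil)
qed

lemma stopped_visit_martingale_reached: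
  assumes "m \<le> visits {0, int z} xs"
  shows "lam * r ^ z / lam ^ m \<le> stopped_visit_martingale m xs \<and> stopped_visit_martingale m xs \<le> lam / lam ^ m"
proof -
  obtain ys where ys: "m \<le> visits {0, int z} ys" "ys = [] \<or> \<not> m \<le> visits {0, int z} (tl ys)"
    and eq: "stopped_visit_martingale m xs = visit_martingale ys"
    using stopped_after[of "\<lambda>xs. m \<le> visits {0, int z} xs", OF assms]
    unfolding stopped_visit_martingale_def by blast
  from visits_first_reach[OF ys] have "visits {0, int z} ys = m" "sum_list ys \<in> {0, int z}"
    by auto
  then have "stopped_visit_martingale m xs = lam * potential (sum_list ys) / lam ^ m"
    by (simp add: eq visit_martingale_def)
  moreover have "r ^ z \<le> potential (sum_list ys)" "potential (sum_list ys) \<le> 1"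
    using \<open>sum_list ys \<in> {0, int z}\<close> r_pos r_less_1
    by (auto simp: potential_nonpos potential_z power_le_one)
  ultimately show ?thesis
    using lam_pos by (simp add: divide_right_mono mult_left_mono)
qed

lemma stopped_visit_martingale_unreached:
  assumes "\<not> m \<le> visits {0, int z} xs"
  shows "stopped_visit_martingale m xs \<le> r powi sum_list xs / (r ^ z * lam ^ m)"
proof -
  have "stopped_visit_martingale m xs = visit_martingale xs"
    unfolding stopped_visit_martingale_def by (rule stopped_before) (use assms in auto)
  also have "\<dots> \<le> potential (sum_list xs) / lam ^ visits {0, int z} xs"
    using lam_pos lam_less_1 potential_pos[of "sum_list xs"]
    by (auto simp: visit_martingale_def divide_right_mono mult_left_le_one_le)
  also have "\<dots> \<le> potential (sum_list xs) / lam ^ m"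
    using assms lam_pos lam_less_1 potential_pos[of "sum_list xs"]
    by (intro divide_left_mono power_decreasing) auto
  also have "\<dots> \<le> r powi sum_list xs / (r ^ z * lam ^ m)"
    using potential_le_power_int[of "sum_list xs"] lam_pos
    by (simp add: divide_right_mono flip: divide_divide_eq_left)
  finally show ?thesis .
qed

lemma stopped_visit_martingale_le:
  "stopped_visit_martingale m xs
     \<le> (if m \<le> visits {0, int z} xs then lam / lam ^ m else 0) + r powi sum_list xs / (r ^ z * lam ^ m)"
  using stopped_visit_martingale_reached[of m xs] stopped_visit_martingale_unreached[of m xs] r_pos lam_pos
  by (cases "m \<le> visits {0, int z} xs") (auto intro: add_increasing2)

lemma stopped_visit_martingale_nonneg: "0 \<le> stopped_visit_martingale m xs"
  unfolding stopped_visit_martingale_def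
  by (induction xs) (auto simp: visit_martingale_def lam_pos potential_pos less_imp_le)

lemma visits_tail_le:
  "(\<Sum>xs\<in>{xs\<in>pm_lists n. m \<le> visits {0, int z} xs}. path_weight p q xs) \<le> lam ^ m / r ^ z"
proof -
  let ?T = "\<Sum>xs\<in>{xs\<in>pm_lists n. m \<le> visits {0, int z} xs}. path_weight p q xs"
  have w: "0 \<le> path_weight p q xs" for xs
    using p_pos q_pos by (intro path_weight_nonneg) auto
  have "lam * r ^ z / lam ^ m * ?T
      = (\<Sum>xs\<in>{xs\<in>pm_lists n. m \<le> visits {0, int z} xs}. path_weight p q xs * (lam * r ^ z / lam ^ m))"
    by (simp add: sum_distrib_left mult.commute)
  also have "\<dots> \<le> (\<Sum>xs\<in>{xs\<in>pm_lists n. m \<le> visits {0, int z} xs}. path_weight p q xs * stopped_visit_martingale m xs)"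
    using stopped_visit_martingale_reached[THEN conjunct1] w by (intro sum_mono mult_left_mono) auto
  also have "\<dots> \<le> (\<Sum>xs\<in>pm_lists n. path_weight p q xs * stopped_visit_martingale m xs)"
    using finite_pm_lists stopped_visit_martingale_nonneg w by (intro sum_mono2) auto
  also have "\<dots> = lam"
    by (rule sum_stopped_visit_martingale)
  finally show ?thesis
    using lam_pos r_pos by (simp add: field_simps)
qed

lemma visits_tail_ge:
  "lam ^ Suc m \<le> lam * (\<Sum>xs\<in>{xs\<in>pm_lists n. m \<le> visits {0, int z} xs}. path_weight p q xs)
     + (p * r + q / r) ^ n / r ^ z"
proof -
  let ?T = "\<Sum>xs\<in>{xs\<in>pm_lists n. m \<le> visits {0, int z} xs}. path_weight p q xs"
  let ?c = "r ^ z * lam ^ m"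
  have "lam = (\<Sum>xs\<in>pm_lists n. path_weight p q xs * stopped_visit_martingale m xs)"
    by (rule sum_stopped_visit_martingale[symmetric])
  also have "\<dots> \<le> (\<Sum>xs\<in>pm_lists n. path_weight p q xs
      * ((if m \<le> visits {0, int z} xs then lam / lam ^ m else 0) + r powi sum_list xs / ?c))"
    using p_pos q_pos stopped_visit_martingale_le
    by (intro sum_mono mult_left_mono path_weight_nonneg) auto
  also have "\<dots> = lam / lam ^ m * ?T + (p * r + q / r) ^ n / ?c"
  proof -
    have "(\<Sum>xs\<in>pm_lists n. path_weight p q xs * (if m \<le> visits {0, int z} xs then lam / lam ^ m else 0))
        = lam / lam ^ m * ?T"
      unfolding sum_distrib_left sum.inter_filter[OF finite_pm_lists] by (intro sum.cong) auto
    moreover have "(\<Sum>xs\<in>pm_lists n. path_weight p q xs * (r powi sum_list xs / ?c)) = (p * r + q / r) ^ n / ?c"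
      using r_pos by (simp only: times_divide_eq_right sum_divide_distrib[symmetric] sum_path_weight_power_int)
    ultimately show ?thesis by (simp only: distrib_left sum.distrib)
  qed
  finally have "lam * lam ^ m \<le> (lam / lam ^ m * ?T + (p * r + q / r) ^ n / ?c) * lam ^ m"
    using lam_pos by (simp add: mult_right_mono)
  also have "\<dots> = lam * ?T + (p * r + q / r) ^ n / r ^ z"
    using lam_pos r_pos by (simp add: field_simps)
  finally show ?thesis by simp
qed

end

section \<open>The random walk and its local times\<close>

primrec walk_steps :: "(nat \<Rightarrow> 'a \<Rightarrow> int) \<Rightarrow> nat \<Rightarrow> 'a \<Rightarrow> int list" where
  "walk_steps X 0 \<omega> = []"
| "walk_steps X (Suc n) \<omega> = X (Suc n) \<omega> # walk_steps X n \<omega>"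

lemma length_walk_steps [simp]: "length (walk_steps X n \<omega>) = n"
  by (induction n) auto

lemma nth_walk_steps: "i < n \<Longrightarrow> walk_steps X n \<omega> ! i = X (n - i) \<omega>"
  by (induction n arbitrary: i) (auto simp: nth_Cons split: nat.split)

lemma set_walk_steps: "set (walk_steps X n \<omega>) = (\<lambda>j. X j \<omega>) ` {1..n}"
  by (induction n) (auto simp: atLeastAtMostSuc_conv)

lemma walk_steps_eq_iff:
  "walk_steps X n \<omega> = xs \<longleftrightarrow> length xs = n \<and> (\<forall>j\<in>{1..n}. X j \<omega> = xs ! (n - j))"
proof
  assume "walk_steps X n \<omega> = xs"
  then show "length xs = n \<and> (\<forall>j\<in>{1..n}. X j \<omega> = xs ! (n - j))"
    using nth_walk_steps[of "n - j" n X \<omega> for j] by auto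
next
  assume xs: "length xs = n \<and> (\<forall>j\<in>{1..n}. X j \<omega> = xs ! (n - j))"
  show "walk_steps X n \<omega> = xs"
  proof (rule nth_equalityI)
    fix i assume "i < length (walk_steps X n \<omega>)"
    then have "i < n" "n - i \<in> {1..n}" "n - (n - i) = i" by auto
    then show "walk_steps X n \<omega> ! i = xs ! i"
      using xs nth_walk_steps by metis
  qed (use xs in simp)
qed

lemma sum_list_walk_steps: "sum_list (walk_steps X n \<omega>) = walkS X n \<omega>"
  by (induction n) (auto simp: walkS_def)

lemma xi_Suc: "xi X x (Suc n) \<omega> = xi X x n \<omega> + (if walkS X (Suc n) \<omega> = x then 1 else 0)"
proof -
  have "{k. 0 < k \<and> k \<le> Suc n \<and> walkS X k \<omega> = x}
      = {k. 0 < k \<and> k \<le> n \<and> walkS X k \<omega> = x} \<union> (if walkS X (Suc n) \<omega> = x then {Suc n} else {})"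
    by (auto simp: le_Suc_eq)
  then show ?thesis unfolding xi_def by auto
qed

lemma Xi_Suc:
  "finite A \<Longrightarrow> Xi X A (Suc n) \<omega> = Xi X A n \<omega> + (if walkS X (Suc n) \<omega> \<in> A then 1 else 0)"
  by (simp add: Xi_def xi_Suc sum.distrib sum.delta')

lemma visits_walk_steps: "finite A \<Longrightarrow> visits A (walk_steps X n \<omega>) = Xi X A n \<omega>"
proof (induction n)
  case 0
  then show ?case by (auto simp: Xi_def xi_def)
next
  case (Suc n)
  then show ?case
    by (simp add: Xi_Suc flip: sum_list_walk_steps)
qed

lemma Xi_mono: "n \<le> n' \<Longrightarrow> Xi X A n \<omega> \<le> Xi X A n' \<omega>"
  unfolding Xi_def xi_def
  by (intro sum_mono card_mono) (auto intro: finite_subset[of _ "{..n'}"])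

lemma ereal_Xi_inf_eq_SUP:
  "finite A \<Longrightarrow> ereal_of_enat (Xi_inf X A \<omega>) = (SUP n. ereal (real (Xi X A n \<omega>)))"
proof -
  assume A: "finite A"
  have mono: "incseq (\<lambda>n. ereal (real (xi X x n \<omega>)))" for x
    unfolding xi_def by (intro monoI ereal_less_eq(3)[THEN iffD2] of_nat_mono card_mono) (auto intro: finite_subset[of _ "{..n}" for n])
  have "ereal_of_enat (Xi_inf X A \<omega>) = (\<Sum>x\<in>A. ereal_of_enat (xi_inf X x \<omega>))"
    unfolding Xi_inf_def by (induction A rule: infinite_finite_induct) (auto simp: ereal_of_enat_add)
  also have "\<dots> = (\<Sum>x\<in>A. SUP n. ereal (real (xi X x n \<omega>)))"
    by (simp add: xi_inf_def ereal_of_enat_SUP image_comp)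
  also have "\<dots> = (SUP n. \<Sum>x\<in>A. ereal (real (xi X x n \<omega>)))"
    using mono by (subst SUP_ereal_sum) auto
  also have "\<dots> = (SUP n. ereal (real (Xi X A n \<omega>)))"
    by (simp add: Xi_def)
  finally show ?thesis .
qed

lemma ereal_le_Xi_inf_iff:
  assumes "finite A"
  shows "ereal u \<le> ereal_of_enat (Xi_inf X A \<omega>) \<longleftrightarrow> (\<exists>n. u \<le> real (Xi X A n \<omega>))"
proof
  assume "ereal u \<le> ereal_of_enat (Xi_inf X A \<omega>)"
  show "\<exists>n. u \<le> real (Xi X A n \<omega>)"
  proof (rule ccontr)
    assume "\<nexists>n. u \<le> real (Xi X A n \<omega>)"
    then have "int (Xi X A n \<omega>) < \<lceil>u\<rceil>" for n
      by (simp add: less_ceiling_iff not_le)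
    then have "real (Xi X A n \<omega>) \<le> real_of_int (\<lceil>u\<rceil> - 1)" for n
      by (metis of_int_le_iff of_int_of_nat_eq zle_diff1_eq)
    then have "(SUP n. ereal (real (Xi X A n \<omega>))) \<le> ereal (real_of_int (\<lceil>u\<rceil> - 1))"
      by (intro SUP_least) simp
    with \<open>ereal u \<le> _\<close> have "ereal u \<le> ereal (real_of_int (\<lceil>u\<rceil> - 1))"
      unfolding ereal_Xi_inf_eq_SUP[OF assms] by (rule order_trans)
    then have "u \<le> real_of_int (\<lceil>u\<rceil> - 1)" by (simp only: ereal_less_eq)
    then show False by linarith
  qed
next
  assume "\<exists>n. u \<le> real (Xi X A n \<omega>)"
  then obtain n where "ereal u \<le> ereal (real (Xi X A n \<omega>))" by auto
  also have "\<dots> \<le> (SUP n. ereal (real (Xi X A n \<omega>)))" by (rule SUP_upper) simp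
  finally show "ereal u \<le> ereal_of_enat (Xi_inf X A \<omega>)"
    unfolding ereal_Xi_inf_eq_SUP[OF assms] .
qed

locale pm_walk = prob_space M for M :: "'a measure" +
  fixes X :: "nat \<Rightarrow> 'a \<Rightarrow> int" and p q :: real
  assumes measurable_X: "\<And>i. X i \<in> measurable M (count_space UNIV)"
    and indep_X: "indep_vars (\<lambda>_. count_space UNIV) X {1..}"
    and prob_X_1: "\<And>i. i \<ge> 1 \<Longrightarrow> prob {\<omega> \<in> space M. X i \<omega> = 1} = p"
    and prob_X_minus_1: "\<And>i. i \<ge> 1 \<Longrightarrow> prob {\<omega> \<in> space M. X i \<omega> = -1} = q"
    and p_plus_q: "p + q = 1"
begin

lemma sets_X_eq: "{\<omega> \<in> space M. X i \<omega> = a} \<in> events"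
  using measurable_sets[OF measurable_X, of "{a}" i] by (simp add: vimage_def Int_def conj_commute)

lemma measurable_walk_steps: "walk_steps X n \<in> measurable M (count_space UNIV)"
proof (induction n)
  case (Suc n)
  have "(\<lambda>\<omega>. (X (Suc n) \<omega>, walk_steps X n \<omega>)) \<in> measurable M (count_space UNIV \<Otimes>\<^sub>M count_space UNIV)"
    using measurable_X Suc by (rule measurable_Pair)
  then have "(\<lambda>\<omega>. case (X (Suc n) \<omega>, walk_steps X n \<omega>) of (e, xs) \<Rightarrow> e # xs) \<in> measurable M (count_space UNIV)"
    by (rule measurable_compose) (simp add: pair_measure_countable)
  then show ?case by simp
qed simp

lemma sets_walk_steps: "{\<omega> \<in> space M. P (walk_steps X n \<omega>)} \<in> events"
  using measurable_sets[OF measurable_walk_steps, of "{xs. P xs}" n] by (simp add: vimage_def Int_def conj_commute)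

lemma prob_walk_steps_eq:
  assumes xs: "xs \<in> pm_lists n"
  shows "prob {\<omega> \<in> space M. walk_steps X n \<omega> = xs} = path_weight p q xs"
proof (cases "n = 0")
  case True
  then show ?thesis using xs by (simp add: pm_lists_def prob_space)
next
  case False
  have len: "length xs = n" and set: "set xs \<subseteq> {-1, 1}" using xs by (auto simp: pm_lists_def)
  define A where "A j = {\<omega> \<in> space M. X j \<omega> = xs ! (n - j)}" for j
  have "{\<omega> \<in> space M. walk_steps X n \<omega> = xs} = (\<Inter>j\<in>{1..n}. A j)"
  proof -
    have "1 \<in> {1..n}" using False by simp
    then show ?thesis using len by (auto simp: A_def walk_steps_eq_iff)
  qed
  moreover have "prob (\<Inter>j\<in>{1..n}. A j) = (\<Prod>j\<in>{1..n}. prob (A j))"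
    using indep_X False unfolding indep_vars_def2
    by (intro indep_setsD[of _ "{1..}"]) (auto simp: A_def intro!: exI[of _ "{xs ! (n - j)}" for j])
  moreover have "prob (A j) = (if xs ! (n - j) = 1 then p else q)" if "j \<in> {1..n}" for j
  proof -
    have "xs ! (n - j) \<in> set xs" using that len by (intro nth_mem) auto
    then have "xs ! (n - j) \<in> {-1, 1}" using set by blast
    then show ?thesis using that prob_X_1 prob_X_minus_1 by (auto simp: A_def)
  qed
  moreover have "(\<Prod>j\<in>{1..n}. if xs ! (n - j) = 1 then p else q) = (\<Prod>i\<in>{0..<n}. if xs ! i = 1 then p else q)"
    by (rule prod.reindex_bij_witness[of _ "\<lambda>i. n - i" "\<lambda>j. n - j"]) auto
  moreover have "\<dots> = path_weight p q xs"
    unfolding path_weight_def prod.list_conv_set_nth by (simp add: len)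
  ultimately show ?thesis by simp
qed

lemma null_sets_X_not_pm: "i \<ge> 1 \<Longrightarrow> {\<omega> \<in> space M. X i \<omega> \<notin> {-1, 1}} \<in> null_sets M"
proof -
  assume i: "i \<ge> 1"
  have "prob ({\<omega> \<in> space M. X i \<omega> = 1} \<union> {\<omega> \<in> space M. X i \<omega> = -1})
      = prob {\<omega> \<in> space M. X i \<omega> = 1} + prob {\<omega> \<in> space M. X i \<omega> = -1}"
    by (rule finite_measure_Union) (auto simp: sets_X_eq)
  then have "prob ({\<omega> \<in> space M. X i \<omega> = 1} \<union> {\<omega> \<in> space M. X i \<omega> = -1}) = 1"
    using prob_X_1[OF i] prob_X_minus_1[OF i] p_plus_q by simp
  moreover have "{\<omega> \<in> space M. X i \<omega> \<notin> {-1, 1}} = space M - ({\<omega> \<in> space M. X i \<omega> = 1} \<union> {\<omega> \<in> space M. X i \<omega> = -1})"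
    by auto
  ultimately show ?thesis
    using sets_X_eq by (auto simp: prob_compl emeasure_eq_measure intro!: null_setsI)
qed

lemma null_sets_walk_steps_not_pm: "{\<omega> \<in> space M. walk_steps X n \<omega> \<notin> pm_lists n} \<in> null_sets M"
proof -
  have "{\<omega> \<in> space M. walk_steps X n \<omega> \<notin> pm_lists n} = (\<Union>j\<in>{1..n}. {\<omega> \<in> space M. X j \<omega> \<notin> {-1, 1}})"
    by (auto simp: pm_lists_def set_walk_steps)
  also have "\<dots> \<in> null_sets M"
    by (intro null_sets_UN' null_sets_X_not_pm) auto
  finally show ?thesis .
qed

lemma prob_walk_steps_event:
  "prob {\<omega> \<in> space M. P (walk_steps X n \<omega>)} = (\<Sum>xs\<in>{xs\<in>pm_lists n. P xs}. path_weight p q xs)"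
proof -
  let ?E = "\<lambda>xs. {\<omega> \<in> space M. walk_steps X n \<omega> = xs}"
  let ?N = "{\<omega> \<in> space M. P (walk_steps X n \<omega>) \<and> walk_steps X n \<omega> \<notin> pm_lists n}"
  have "{\<omega> \<in> space M. P (walk_steps X n \<omega>)} = (\<Union>xs\<in>{xs\<in>pm_lists n. P xs}. ?E xs) \<union> ?N"
    by blast
  moreover have "?N \<in> null_sets M"
    by (rule null_sets_subset[OF null_sets_walk_steps_not_pm sets_walk_steps]) blast
  moreover have "(\<Union>xs\<in>{xs\<in>pm_lists n. P xs}. ?E xs) \<in> events"
    using finite_pm_lists sets_walk_steps by (intro sets.finite_UN) auto
  ultimately have "prob {\<omega> \<in> space M. P (walk_steps X n \<omega>)} = prob (\<Union>xs\<in>{xs\<in>pm_lists n. P xs}. ?E xs)"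
    by (simp add: measure_Un_null_set)
  also have "\<dots> = (\<Sum>xs\<in>{xs\<in>pm_lists n. P xs}. prob (?E xs))"
    using finite_pm_lists sets_walk_steps
    by (intro finite_measure_finite_Union) (auto simp: disjoint_family_on_def)
  also have "\<dots> = (\<Sum>xs\<in>{xs\<in>pm_lists n. P xs}. path_weight p q xs)"
    by (intro sum.cong refl prob_walk_steps_eq) auto
  finally show ?thesis .
qed

end

section \<open>Tail bounds for the number of visits\<close>

lemma powr_square_le_powr_eventually:
  fixes \<rho> l c :: real
  assumes "0 < \<rho>" "\<rho> < 1" "0 < l" "0 < c"
  shows "\<exists>u0>0. \<forall>u\<ge>u0. \<rho> powr (u\<^sup>2) \<le> c * l powr u"
proof -
  define d where "d = min c 1"
  have d: "0 < d" "d \<le> 1" "d \<le> c" using assms by (auto simp: d_def)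
  define u0 where "u0 = max 1 (ln (d * l) / ln \<rho>)"
  have "\<rho> powr (u\<^sup>2) \<le> c * l powr u" if "u \<ge> u0" for u
  proof -
    have u1: "1 \<le> u" using that by (simp add: u0_def)
    have "ln (d * l) / ln \<rho> \<le> u" using that by (simp add: u0_def)
    then have u_ln: "u * ln \<rho> \<le> ln (d * l)"
      using assms by (simp add: divide_le_eq mult.commute)
    have "\<rho> powr u = exp (u * ln \<rho>)"
      using assms by (simp add: powr_def mult.commute)
    also have "\<dots> \<le> exp (ln (d * l))"
      using u_ln by simp
    also have "\<dots> = d * l"
      using d assms by simp
    finally have "\<rho> powr u \<le> d * l" .
    then have "\<rho> powr (u\<^sup>2) \<le> (d * l) powr u"
      using assms u1 by (simp add: power2_eq_square flip: powr_powr) (intro powr_mono2, auto)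
    also have "\<dots> = d powr u * l powr u"
      using d assms by (simp add: powr_mult)
    also have "\<dots> \<le> d * l powr u"
      using d u1 powr_mono'[of 1 u d] by (intro mult_right_mono) auto
    also have "\<dots> \<le> c * l powr u"
      using d by (intro mult_right_mono) auto
    finally show ?thesis .
  qed
  moreover have "u0 > 0" by (simp add: u0_def)
  ultimately show ?thesis by blast
qed

locale walk_two_point_visits = pm_walk M X p q + two_point_potential p q r z
  for M :: "'a measure" and X p q r z
begin

lemma prob_Xi_ge_eq:
  "prob {\<omega> \<in> space M. u \<le> real (Xi X {0, int z} n \<omega>)}
     = (\<Sum>xs\<in>{xs\<in>pm_lists n. nat \<lceil>u\<rceil> \<le> visits {0, int z} xs}. path_weight p q xs)"
  by (simp add: prob_walk_steps_event[symmetric] visits_walk_steps le_nat_iff ceiling_le_iff)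

lemma sets_Xi_ge: "{\<omega> \<in> space M. u \<le> real (Xi X {0, int z} n \<omega>)} \<in> events"
  using sets_walk_steps[of "\<lambda>xs. u \<le> real (visits {0, int z} xs)" n] by (simp add: visits_walk_steps)

lemma Xi_inf_ge_eq_UN:
  "{\<omega> \<in> space M. ereal u \<le> ereal_of_enat (Xi_inf X {0, int z} \<omega>)}
     = (\<Union>n. {\<omega> \<in> space M. u \<le> real (Xi X {0, int z} n \<omega>)})"
  by (auto simp: ereal_le_Xi_inf_iff)

lemma prob_Xi_ge_le_prob_Xi_inf_ge:
  "prob {\<omega> \<in> space M. u \<le> real (Xi X {0, int z} n \<omega>)}
     \<le> prob {\<omega> \<in> space M. ereal u \<le> ereal_of_enat (Xi_inf X {0, int z} \<omega>)}"
  unfolding Xi_inf_ge_eq_UN using sets_Xi_ge by (intro finite_measure_mono) auto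

lemma prob_Xi_ge_le: "prob {\<omega> \<in> space M. u \<le> real (Xi X {0, int z} n \<omega>)} \<le> lam powr u / r ^ z"
proof -
  have "prob {\<omega> \<in> space M. u \<le> real (Xi X {0, int z} n \<omega>)} \<le> lam ^ nat \<lceil>u\<rceil> / r ^ z"
    unfolding prob_Xi_ge_eq by (rule visits_tail_le)
  also have "lam ^ nat \<lceil>u\<rceil> = lam powr real (nat \<lceil>u\<rceil>)"
    by (rule powr_realpow[OF lam_pos, symmetric])
  also have "\<dots> \<le> lam powr u"
    using lam_pos lam_less_1 by (intro powr_mono') linarith+
  finally show ?thesis
    using r_pos by (simp add: divide_right_mono)
qed

lemma prob_Xi_inf_ge_le:
  "prob {\<omega> \<in> space M. ereal u \<le> ereal_of_enat (Xi_inf X {0, int z} \<omega>)} \<le> lam powr u / r ^ z"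
proof -
  have "incseq (\<lambda>n. {\<omega> \<in> space M. u \<le> real (Xi X {0, int z} n \<omega>)})"
  proof (rule incseq_SucI, safe)
    fix n \<omega> assume "u \<le> real (Xi X {0, int z} n \<omega>)"
    also have "real (Xi X {0, int z} n \<omega>) \<le> real (Xi X {0, int z} (Suc n) \<omega>)"
      by (simp add: Xi_mono)
    finally show "u \<le> real (Xi X {0, int z} (Suc n) \<omega>)" .
  qed
  then have "(\<lambda>n. prob {\<omega> \<in> space M. u \<le> real (Xi X {0, int z} n \<omega>)})
      \<longlonglongrightarrow> prob {\<omega> \<in> space M. ereal u \<le> ereal_of_enat (Xi_inf X {0, int z} \<omega>)}"
    unfolding Xi_inf_ge_eq_UN using sets_Xi_ge
    by (intro finite_Lim_measure_incseq) auto
  then show ?thesis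
    by (rule LIMSEQ_le_const2) (use prob_Xi_ge_le in auto)
qed

lemma prob_Xi_ge_ge:
  assumes "0 \<le> u" and small: "(p * r + q / r) ^ n \<le> r ^ z * lam\<^sup>2 / 2 * lam powr u"
  shows "lam / 2 * lam powr u \<le> prob {\<omega> \<in> space M. u \<le> real (Xi X {0, int z} n \<omega>)}"
proof -
  let ?P = "prob {\<omega> \<in> space M. u \<le> real (Xi X {0, int z} n \<omega>)}"
  have "lam\<^sup>2 * lam powr u = lam powr (u + 2)"
    using lam_pos by (simp add: powr_add powr_realpow)
  also have "\<dots> \<le> lam powr real (Suc (nat \<lceil>u\<rceil>))"
    using assms(1) lam_pos lam_less_1 by (intro powr_mono') linarith+
  also have "\<dots> = lam ^ Suc (nat \<lceil>u\<rceil>)"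
    by (rule powr_realpow[OF lam_pos])
  also have "\<dots> \<le> lam * ?P + (p * r + q / r) ^ n / r ^ z"
    unfolding prob_Xi_ge_eq by (rule visits_tail_ge)
  also have "\<dots> \<le> lam * ?P + lam\<^sup>2 / 2 * lam powr u"
    using small r_pos by (simp add: field_simps)
  finally have "lam * (lam / 2 * lam powr u) \<le> lam * ?P"
    by (simp add: power2_eq_square)
  then show ?thesis using lam_pos by simp
qed

lemma prob_Xi_ge_ge_eventually:
  "\<exists>u0>0. \<forall>u\<ge>u0. \<forall>n. u\<^sup>2 \<le> real n
     \<longrightarrow> lam / 2 * lam powr u \<le> prob {\<omega> \<in> space M. u \<le> real (Xi X {0, int z} n \<omega>)}"
proof -
  let ?\<rho> = "p * r + q / r"
  obtain u0 where "u0 > 0" and u0: "\<And>u. u \<ge> u0 \<Longrightarrow> ?\<rho> powr (u\<^sup>2) \<le> r ^ z * lam\<^sup>2 / 2 * lam powr u"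
    using powr_square_le_powr_eventually[of ?\<rho> lam "r ^ z * lam\<^sup>2 / 2"] step_mgf_bounds lam_pos r_pos
    by auto
  have "lam / 2 * lam powr u \<le> prob {\<omega> \<in> space M. u \<le> real (Xi X {0, int z} n \<omega>)}"
    if "u \<ge> u0" "u\<^sup>2 \<le> real n" for u n
  proof (rule prob_Xi_ge_ge)
    show "0 \<le> u" using that \<open>u0 > 0\<close> by simp
    have "?\<rho> ^ n = ?\<rho> powr real n" by (rule powr_realpow[OF step_mgf_bounds(1), symmetric])
    also have "\<dots> \<le> ?\<rho> powr (u\<^sup>2)" using that(2) step_mgf_bounds by (intro powr_mono') simp_all
    finally show "?\<rho> ^ n \<le> r ^ z * lam\<^sup>2 / 2 * lam powr u" using u0[OF that(1)] by simp
  qed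
  then show ?thesis using \<open>u0 > 0\<close> by blast
qed

end

lemma powr_half_eq_sqrt_power:
  assumes "0 < h"
  shows "h powr (real z / 2) = sqrt h ^ z"
proof -
  have "h powr (real z / 2) = (h powr (1 / 2)) powr real z"
    by (simp add: powr_powr)
  also have "\<dots> = sqrt h ^ z"
    using assms by (simp add: powr_half_sqrt powr_realpow)
  finally show ?thesis .
qed

theorem lemma5p1:
  fixes M :: "'a measure" and X :: "nat \<Rightarrow> 'a \<Rightarrow> int"
    and p q :: real and z :: nat
  assumes "prob_space M"
    and "0 < q" "q < p" "p < 1" "p + q = 1"
    and "\<And>i. X i \<in> measurable M (count_space UNIV)"
    and "prob_space.indep_vars M (\<lambda>_. count_space UNIV) X {1..}"
    and "\<And>i. i \<ge> 1 \<Longrightarrow> measure M {\<omega> \<in> space M. X i \<omega> = 1} = p"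
    and "\<And>i. i \<ge> 1 \<Longrightarrow> measure M {\<omega> \<in> space M. X i \<omega> = -1} = q"
    and "z > 0"
  shows "\<exists>u0 > 0. \<exists>c1 > 0. \<exists>c2 > 0. \<forall>u::real \<ge> u0. \<forall>n::nat. real n \<ge> u\<^sup>2 \<longrightarrow>
     (let h = q / p;
          \<theta> = - ln ((2 * q + h powr (real z / 2)) / (1 + h powr (real z / 2)))
      in c1 * exp (- \<theta> * u)
           \<le> measure M {\<omega> \<in> space M. real (Xi X {0, int z} n \<omega>) \<ge> u}
         \<and> measure M {\<omega> \<in> space M. real (Xi X {0, int z} n \<omega>) \<ge> u}
           \<le> measure M {\<omega> \<in> space M. ereal_of_enat (Xi_inf X {0, int z} \<omega>) \<ge> ereal u}
         \<and> measure M {\<omega> \<in> space M. ereal_of_enat (Xi_inf X {0, int z} \<omega>) \<ge> ereal u}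
           \<le> c2 * exp (- \<theta> * u))"
proof -
  interpret pm_walk M X p q
    by (intro pm_walk.intro pm_walk_axioms.intro) (fact assms)+
  define r where "r = sqrt (q / p)"
  have pq: "0 < p" "0 < q / p" "q / p < 1" using assms by auto
  have r: "0 < r" "r < 1" "r\<^sup>2 = q / p" using pq by (simp_all add: r_def)
  interpret walk_two_point_visits M X p q r z
    by unfold_locales (use pq r assms in simp_all)
  have "(q / p) powr (real z / 2) = r ^ z"
    using pq by (simp add: powr_half_eq_sqrt_power r_def)
  then have "(2 * q + (q / p) powr (real z / 2)) / (1 + (q / p) powr (real z / 2)) = lam"
    by (simp add: lam_def)
  then have exp_theta: "exp (- (- ln ((2 * q + (q / p) powr (real z / 2)) / (1 + (q / p) powr (real z / 2)))) * u)
      = lam powr u" for u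
    using lam_pos by (simp add: powr_def mult.commute)
  obtain u0 where "u0 > 0" and lower: "\<And>u n. u \<ge> u0 \<Longrightarrow> u\<^sup>2 \<le> real n
      \<Longrightarrow> lam / 2 * lam powr u \<le> prob {\<omega> \<in> space M. u \<le> real (Xi X {0, int z} n \<omega>)}"
    using prob_Xi_ge_ge_eventually by blast
  have rescale: "lam powr u / r ^ z = 1 / r ^ z * lam powr u" for u
    by simp
  show ?thesis
    unfolding Let_def exp_theta
    using \<open>u0 > 0\<close> lam_pos r_pos lower rescale prob_Xi_ge_le_prob_Xi_inf_ge prob_Xi_inf_ge_le
    by (intro exI[of _ u0] exI[of _ "lam / 2"] exI[of _ "1 / r ^ z"] conjI allI impI) simp_all
qed

end
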